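(* There exist an argumentation semantics $\sigma$ whose extensions are maximal conflict-free sets (w.r.t. set inclusion) and argumentation frameworks $AF=(AR,Attacks)$, $AF'=(AR',Attacks')$ with $AF\preceq_N AF'$ such that the following statement does NOT hold: if for all $E\in\sigma(AF)$ and all $E'\in\sigma(AF')$ we have $E'\not\subseteq AR$ or $E'=E$, then for all $E\in\sigma(AF)$ and all $E'\in\sigma(AF')$ we have $E\subseteq E'$.
   Context: An argumentation framework is a pair $(AR,Attacks)$ with $AR$ a finite set and $Attacks\subseteq AR\times AR$; $a$ attacks $b$ iff $(a,b)\in Attacks$. A set $S$ is conflict-free iff no element of $S$ attacks an element of $S$. An argumentation semantics $\sigma$ assigns to each argumentation framework a set $\sigma(AF)$ of subsets of $AR$; "$\sigma$'s extensions are maximal conflict-free sets" means that for every $AF$, every $E\in\sigma(AF)$ is a $\subseteq$-maximal conflict-free subset of the argument set of $AF$. $AF\preceq_N AF'$ (normal expansion) iff $AR\subseteq AR'$, $Attacks\subseteq Attacks'$ and no $(a,b)\in Attacks'\setminus Attacks$ has both $a,b\in AR$. *)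

theory Defs
  imports Main
begin

type_synonym 'a af = "'a set \<times> ('a \<times> 'a) set"

definition is_af :: "'a af \<Rightarrow> bool" where
  "is_af AF \<longleftrightarrow> finite (fst AF) \<and> snd AF \<subseteq> fst AF \<times> fst AF"

definition conflict_free :: "'a af \<Rightarrow> 'a set \<Rightarrow> bool" where
  "conflict_free AF S \<longleftrightarrow> (\<forall>a\<in>S. \<forall>b\<in>S. (a, b) \<notin> snd AF)"

definition maximal_cf :: "'a af \<Rightarrow> 'a set \<Rightarrow> bool" where
  "maximal_cf AF S \<longleftrightarrow> S \<subseteq> fst AF \<and> conflict_free AF S \<and>
     (\<forall>T. S \<subseteq> T \<and> T \<subseteq> fst AF \<and> conflict_free AF T \<longrightarrow> T = S)"

definition ext_maximal_cf :: "('a af \<Rightarrow> 'a set set) \<Rightarrow> bool" where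
  "ext_maximal_cf \<sigma> \<longleftrightarrow> (\<forall>AF. is_af AF \<longrightarrow> (\<forall>E\<in>\<sigma> AF. maximal_cf AF E))"

definition normal_expansion :: "'a af \<Rightarrow> 'a af \<Rightarrow> bool" where
  "normal_expansion AF AF' \<longleftrightarrow> fst AF \<subseteq> fst AF' \<and> snd AF \<subseteq> snd AF' \<and>
     (\<forall>(a, b)\<in>snd AF' - snd AF. \<not> (a \<in> fst AF \<and> b \<in> fst AF))"

end

theory Submission
  imports Defs
begin

text \<open>
  Take the naive semantics (all maximal conflict-free sets) and expand the framework
  with the single argument a by a new argument b attacking a. The old framework has
  the unique extension {a}; the new one has {a} and {b}. The hypothesis only
  constrains new extensions inside the old arguments, so {b} escapes it, yet {a} is
  not contained in {b}.
\<close>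

definition naive :: "'a af \<Rightarrow> 'a set set" where
  "naive AF = {E. maximal_cf AF E}"

lemma ext_maximal_cf_naive: "ext_maximal_cf naive"
  unfolding ext_maximal_cf_def naive_def by simp

lemma naive_singleton: "naive ({a}, {}) = {{a}}"
  unfolding naive_def maximal_cf_def conflict_free_def by auto

lemma naive_single_attack:
  assumes "a \<noteq> b"
  shows "naive ({a, b}, {(b, a)}) = {{a}, {b}}"
  using assms unfolding naive_def maximal_cf_def conflict_free_def by auto

theorem proposition51:
  shows "\<exists>(\<sigma> :: nat af \<Rightarrow> nat set set) AF AF'.
    ext_maximal_cf \<sigma> \<and> is_af AF \<and> is_af AF' \<and> normal_expansion AF AF' \<and>
    \<not> ((\<forall>E\<in>\<sigma> AF. \<forall>E'\<in>\<sigma> AF'. \<not> E' \<subseteq> fst AF \<or> E' = E) \<longrightarrow>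
         (\<forall>E\<in>\<sigma> AF. \<forall>E'\<in>\<sigma> AF'. E \<subseteq> E'))"
proof (intro exI conjI)
  let ?AF = "({0::nat}, {})" and ?AF' = "({0::nat, 1}, {(1::nat, 0::nat)})"
  show "ext_maximal_cf naive" by (fact ext_maximal_cf_naive)
  show "is_af ?AF" "is_af ?AF'" unfolding is_af_def by auto
  show "normal_expansion ?AF ?AF'" unfolding normal_expansion_def by auto
  show "\<not> ((\<forall>E\<in>naive ?AF. \<forall>E'\<in>naive ?AF'. \<not> E' \<subseteq> fst ?AF \<or> E' = E) \<longrightarrow>
         (\<forall>E\<in>naive ?AF. \<forall>E'\<in>naive ?AF'. E \<subseteq> E'))"
    by (simp add: naive_singleton naive_single_attack)
qed

end
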